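(* Let $\mathbb{F}$ be an algebraically closed field of characteristic not three and let $(\mathcal{O},* )$ be the Okubo algebra over $\mathbb{F}$. Then any two idempotents of $(\mathcal{O},* )$ (nonzero elements $f$ with $f*f=f$) are conjugate under the automorphism group $\mathrm{Aut}(\mathcal{O},* )$.
   Context: Since $\mathbb{F}$ is algebraically closed of characteristic $\neq 3$, it contains a primitive cube root of unity $\omega$. The Okubo algebra is the vector space $\mathcal{O}=\mathfrak{sl}_3(\mathbb{F})$ of trace-zero $3\times 3$ matrices with multiplication \[ x*y=\omega xy-\omega^2 yx-\frac{\omega-\omega^2}{3}\mathrm{tr}(xy)1, \] where juxtaposition is the usual matrix product. *)

theory Defs
  imports "HOL-Analysis.Analysis" "HOL-Computational_Algebra.Polynomial"
begin

text \<open>The Okubo algebra: trace-zero 3x3 matrices over a field, with the product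
  x * y = w x y - w^2 y x - ((w - w^2)/3) tr(xy) 1, for a primitive cube root of unity w.\<close>

definition msmult :: "'a::field \<Rightarrow> 'a ^ 3 ^ 3 \<Rightarrow> 'a ^ 3 ^ 3" where
  "msmult c A = (\<chi> i j. c * A $ i $ j)"

definition okubo_carrier :: "('a::field ^ 3 ^ 3) set" where
  "okubo_carrier = {x. trace x = 0}"

definition okubo_mult :: "'a::field \<Rightarrow> 'a ^ 3 ^ 3 \<Rightarrow> 'a ^ 3 ^ 3 \<Rightarrow> 'a ^ 3 ^ 3" where
  "okubo_mult w x y =
     msmult w (x ** y) - msmult (w ^ 2) (y ** x) - msmult ((w - w ^ 2) / 3 * trace (x ** y)) (mat 1)"

definition okubo_aut :: "'a::field \<Rightarrow> ('a ^ 3 ^ 3 \<Rightarrow> 'a ^ 3 ^ 3) \<Rightarrow> bool" where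
  "okubo_aut w \<phi> \<longleftrightarrow>
     bij_betw \<phi> okubo_carrier okubo_carrier \<and>
     (\<forall>x\<in>okubo_carrier. \<forall>y\<in>okubo_carrier. \<phi> (x + y) = \<phi> x + \<phi> y) \<and>
     (\<forall>c. \<forall>x\<in>okubo_carrier. \<phi> (msmult c x) = msmult c (\<phi> x)) \<and>
     (\<forall>x\<in>okubo_carrier. \<forall>y\<in>okubo_carrier. \<phi> (okubo_mult w x y) = okubo_mult w (\<phi> x) (\<phi> y))"

definition okubo_idempotent :: "'a::field \<Rightarrow> 'a ^ 3 ^ 3 \<Rightarrow> bool" where
  "okubo_idempotent w f \<longleftrightarrow> f \<in> okubo_carrier \<and> f \<noteq> 0 \<and> okubo_mult w f f = f"

end

theory Submission
  imports Defs
begin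

text \<open>For an idempotent \<open>e\<close> put \<open>y = (w - w\<^sup>2) e\<close>; the equation \<open>e * e = e\<close> says
  \<open>y\<^sup>2 = y + s\<cdot>1\<close> for a scalar \<open>s\<close>. Since \<open>y\<close> is a nonzero traceless \<open>3\<times>3\<close> matrix and
  \<open>3 \<noteq> 0\<close>, \<open>y\<close> is not scalar, and Cayley-Hamilton together with \<open>tr y = 0\<close> forces \<open>s = 2\<close>.
  Then \<open>(y - 2)(y + 1) = 0\<close>, the columns of \<open>y + 1\<close> are eigenvectors for \<open>2\<close> and those of
  \<open>y - 2\<close> for \<open>-1\<close>, and suitable columns form an eigenbasis: \<open>y\<close> is similar to
  \<open>diag(2,-1,-1)\<close>. So the scaled idempotents are all similar, and conjugation by an
  invertible matrix is an automorphism of the Okubo algebra.\<close>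

lemma msmult_matrix_mult_left: "msmult c ((A::'a::field^3^3) ** B) = msmult c A ** B"
  by (simp add: msmult_def vec_eq_iff matrix_matrix_mult_def sum_distrib_left mult.assoc)

lemma msmult_matrix_mult_right: "msmult c ((A::'a::field^3^3) ** B) = A ** msmult c B"
  by (simp add: msmult_def vec_eq_iff matrix_matrix_mult_def sum_distrib_left mult.left_commute)

lemma msmult_add: "msmult c ((A::'a::field^3^3) + B) = msmult c A + msmult c B"
  by (simp add: msmult_def vec_eq_iff distrib_left)

lemma msmult_msmult: "msmult c (msmult d (A::'a::field^3^3)) = msmult (c * d) A"
  by (simp add: msmult_def vec_eq_iff mult.assoc)

lemma msmult_diff_left: "msmult c (A::'a::field^3^3) - msmult d A = msmult (c - d) A"
  by (simp add: msmult_def vec_eq_iff left_diff_distrib)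

lemma msmult_cancel: "c \<noteq> 0 \<Longrightarrow> msmult c (A::'a::field^3^3) = msmult c B \<Longrightarrow> A = B"
  by (simp add: msmult_def vec_eq_iff)

lemma msmult_eq_0_iff: "c \<noteq> 0 \<Longrightarrow> msmult c (A::'a::field^3^3) = 0 \<longleftrightarrow> A = 0"
  by (auto simp add: msmult_def vec_eq_iff)

lemma trace_msmult: "trace (msmult c (A::'a::field^3^3)) = c * trace A"
  by (simp add: msmult_def trace_def sum_distrib_left)

lemma matrix_mult_diff_right: "((A::'a::ring_1^'n^'m) - B) ** C = A ** C - B ** C"
  by (simp add: vec_eq_iff matrix_matrix_mult_def sum_subtractf left_diff_distrib)

lemma matrix_mult_diff_left: "(C::'a::ring_1^'n^'m) ** (A - B) = C ** A - C ** B"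
  by (simp add: vec_eq_iff matrix_matrix_mult_def sum_subtractf right_diff_distrib)

lemma matrix_mult_add_right: "((A::'a::semiring_1^'n^'m) + B) ** C = A ** C + B ** C"
  by (simp add: vec_eq_iff matrix_matrix_mult_def sum.distrib distrib_right)

lemma trace_conjugate:
  fixes T T' :: "'a::comm_semiring_1^'n^'n"
  assumes "T' ** T = mat 1"
  shows "trace (T ** x ** T') = trace x"
proof -
  have "trace (T ** x ** T') = trace (T' ** (T ** x))" by (rule trace_mul_sym)
  also have "\<dots> = trace x" by (simp add: matrix_mul_assoc assms)
  finally show ?thesis .
qed

lemma matrix_mult_conjugate:
  fixes T T' :: "'a::semiring_1^'n^'n"
  assumes "T' ** T = mat 1"
  shows "(T ** x ** T') ** (T ** y ** T') = T ** (x ** y) ** T'"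
proof -
  have "(T ** x ** T') ** (T ** y ** T') = T ** x ** (T' ** T) ** y ** T'"
    by (simp add: matrix_mul_assoc)
  then show ?thesis by (simp add: assms matrix_mul_assoc)
qed

lemma okubo_aut_conjugation:
  fixes T T' :: "'a::field^3^3"
  assumes TT': "T ** T' = mat 1" and T'T: "T' ** T = mat 1"
  shows "okubo_aut w (\<lambda>x. T ** x ** T')"
  unfolding okubo_aut_def
proof (intro conjI ballI allI)
  show "bij_betw (\<lambda>x. T ** x ** T') okubo_carrier okubo_carrier"
  proof (rule bij_betw_byWitness[where f'="\<lambda>x. T' ** x ** T"])
    show "\<forall>x\<in>okubo_carrier. T' ** (T ** x ** T') ** T = x"
      by (simp add: matrix_mul_assoc T'T flip: matrix_mul_assoc[of _ T' T])
    show "\<forall>x\<in>okubo_carrier. T ** (T' ** x ** T) ** T' = x"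
      by (simp add: matrix_mul_assoc TT' flip: matrix_mul_assoc[of _ T T'])
    show "(\<lambda>x. T ** x ** T') ` okubo_carrier \<subseteq> okubo_carrier"
      using trace_conjugate[OF T'T] by (auto simp: okubo_carrier_def)
    show "(\<lambda>x. T' ** x ** T) ` okubo_carrier \<subseteq> okubo_carrier"
      using trace_conjugate[OF TT'] by (auto simp: okubo_carrier_def)
  qed
  fix x y :: "'a^3^3"
  show "T ** (x + y) ** T' = T ** x ** T' + T ** y ** T'"
    by (simp add: matrix_add_ldistrib matrix_mult_add_right)
  show "T ** okubo_mult w x y ** T' = okubo_mult w (T ** x ** T') (T ** y ** T')"
    unfolding okubo_mult_def matrix_mult_conjugate[OF T'T]
    by (simp add: matrix_mult_diff_left matrix_mult_diff_right trace_conjugate[OF T'T] TT'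
        flip: msmult_matrix_mult_left msmult_matrix_mult_right)
next
  fix c and x :: "'a^3^3"
  show "T ** msmult c x ** T' = msmult c (T ** x ** T')"
    by (simp flip: msmult_matrix_mult_left msmult_matrix_mult_right)
qed

definition matrix_similar :: "'a::field^'n^'n \<Rightarrow> 'a^'n^'n \<Rightarrow> bool" where
  "matrix_similar A B \<longleftrightarrow> (\<exists>S. invertible S \<and> A ** S = S ** B)"

lemma matrix_similarD:
  assumes "matrix_similar A B"
  obtains S S' where "S ** S' = mat 1" "S' ** S = mat 1" "A = S ** B ** S'"
proof -
  obtain S S' where S: "A ** S = S ** B" "S ** S' = mat 1" "S' ** S = mat 1"
    using assms unfolding matrix_similar_def invertible_def by blast
  have "A = A ** S ** S'" by (simp add: S(2) flip: matrix_mul_assoc)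
  then have "A = S ** B ** S'" by (simp add: S(1))
  with S(2,3) show ?thesis by (rule that)
qed

lemma matrix_similar_sym: "matrix_similar A B \<Longrightarrow> matrix_similar B A"
proof -
  assume "matrix_similar A B"
  then obtain S S' where S: "S ** S' = mat 1" "S' ** S = mat 1" "A = S ** B ** S'"
    by (rule matrix_similarD)
  have "B ** S' = S' ** A"
    by (simp add: S(3) matrix_mul_assoc S(2))
  moreover have "invertible S'" using S(1,2) unfolding invertible_def by blast
  ultimately show ?thesis unfolding matrix_similar_def by blast
qed

lemma matrix_similar_trans:
  "matrix_similar A B \<Longrightarrow> matrix_similar B C \<Longrightarrow> matrix_similar A C"
  unfolding matrix_similar_def
  by (metis invertible_mult matrix_mul_assoc)

lemma traceless_quadratic_3x3_char_poly:
  fixes a b c d e f g h i s :: "'a::field"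
  assumes three: "(3::'a) \<noteq> 0"
    and tr: "a + e + i = 0"
    and sq: "a*a + b*d + c*g = a + s" "a*b + b*e + c*h = b" "a*c + b*f + c*i = c"
      "d*a + e*d + f*g = d" "d*b + e*e + f*h = e + s" "d*c + e*f + f*i = f"
      "g*a + h*d + i*g = g" "g*b + h*e + i*h = h" "g*c + h*f + i*i = i + s"
    and nz: "\<not> (a = 0 \<and> b = 0 \<and> c = 0 \<and> d = 0 \<and> e = 0 \<and> f = 0 \<and> g = 0 \<and> h = 0 \<and> i = 0)"
  shows "s = 2" and "a*e - b*d + a*i - c*g + e*i - f*h = -3"
proof -
  define m where "m = a*e - b*d + a*i - c*g + e*i - f*h"
  define p where "p = 1 + s + m"
  define q where "q = (a*e*i + b*f*g + c*d*h - a*f*h - b*d*i - c*e*g) - s"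
  \<comment> \<open>Cayley-Hamilton with \<open>y\<^sup>3 = y\<^sup>2 + s y = (1 + s) y + s\<close> gives \<open>p y = q\<close>.\<close>
  have ch: "p*a = q" "p*e = q" "p*i = q" "p*b = 0" "p*c = 0" "p*d = 0" "p*f = 0" "p*g = 0" "p*h = 0"
    unfolding p_def q_def m_def using tr sq by algebra+
  have "p = 0"
  proof (rule ccontr)
    assume "p \<noteq> 0"
    then have "a = e" "e = i" "b = 0" "c = 0" "d = 0" "f = 0" "g = 0" "h = 0"
      using ch by (metis mult_left_cancel mult_eq_0_iff)+
    moreover have "a = 0" using three tr \<open>a = e\<close> \<open>e = i\<close> by (simp add: algebra_simps)
    ultimately show False using nz by simp
  qed
  \<comment> \<open>\<open>tr (y\<^sup>2) = 3 s\<close> and \<open>tr (y\<^sup>2) = (tr y)\<^sup>2 - 2 m\<close>\<close>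
  moreover have "3 * s + 2 * m = 0"
    unfolding m_def using tr sq by algebra
  ultimately show "s = 2" "m = -3" unfolding p_def by algebra+
qed

lemma traceless_quadratic_3x3_minors:
  fixes a b c d e f g h i :: "'a::field"
  assumes "a + e + i = 0"
    and "a*a + b*d + c*g = a + 2" "a*b + b*e + c*h = b" "a*c + b*f + c*i = c"
      "d*a + e*d + f*g = d" "d*b + e*e + f*h = e + 2" "d*c + e*f + f*i = f"
      "g*a + h*d + i*g = g" "g*b + h*e + i*h = h" "g*c + h*f + i*i = i + 2"
    and "a*e - b*d + a*i - c*g + e*i - f*h = -3"
  shows "(a+1)*(e+1) = b*d" "(a+1)*f = c*d" "b*f = c*(e+1)"
    "(a+1)*h = b*g" "(a+1)*(i+1) = c*g" "b*(i+1) = c*h"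
    "d*h = (e+1)*g" "d*(i+1) = f*g" "(e+1)*(i+1) = f*h"
  using assms by algebra+

definition diag_2_m1_m1 :: "'a::field^3^3" where
  "diag_2_m1_m1 = vector [vector [2, 0, 0], vector [0, -1, 0], vector [0, 0, -1]]"

lemma matrix_3x3_entries:
  fixes y :: "'a::zero^3^3"
  obtains a b c d e f g h i where "y = vector [vector [a,b,c], vector [d,e,f], vector [g,h,i]]"
  by (rule that[of "y$1$1" "y$1$2" "y$1$3" "y$2$1" "y$2$2" "y$2$3" "y$3$1" "y$3$2" "y$3$3"])
    (simp add: vec_eq_iff forall_3)

lemma traceless_quadratic_3x3_eigenbasis:
  fixes a b c d e f g h i :: "'a::field"
  defines "y \<equiv> vector [vector [a,b,c], vector [d,e,f], vector [g,h,i]] :: 'a^3^3"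
  assumes three: "(3::'a) \<noteq> 0"
    and t: "a + e + i = 0"
    and Q: "a*a + b*d + c*g = a + 2" "a*b + b*e + c*h = b" "a*c + b*f + c*i = c"
      "d*a + e*d + f*g = d" "d*b + e*e + f*h = e + 2" "d*c + e*f + f*i = f"
      "g*a + h*d + i*g = g" "g*b + h*e + i*h = h" "g*c + h*f + i*i = i + 2"
    and m: "a*e - b*d + a*i - c*g + e*i - f*h = -3"
  obtains S :: "'a^3^3" where "det S \<noteq> 0" "y ** S = S ** diag_2_m1_m1"
proof -
  note M = traceless_quadratic_3x3_minors[OF t Q m]
  have "(9::'a) = 3 * 3" by simp
  then have nine: "(9::'a) \<noteq> 0" using three by (metis mult_eq_0_iff)
  have "a + 1 \<noteq> 0 \<or> e + 1 \<noteq> 0 \<or> i + 1 \<noteq> 0"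
  proof (rule ccontr)
    assume "\<not> ?thesis"
    then have "a = -1" "e = -1" "i = -1" by (simp_all add: eq_neg_iff_add_eq_0)
    then show False using t three by simp
  qed
  \<comment> \<open>The columns of \<open>S\<close> are one column of \<open>y + 1\<close> (eigenvalue \<open>2\<close>) and the other two
    columns of \<open>y - 2\<close> (eigenvalue \<open>-1\<close>); \<open>det S = \<plusminus>9 (y\<^sub>k\<^sub>k + 1)\<close>.\<close>
  then show thesis
  proof (elim disjE)
    assume k: "a + 1 \<noteq> 0"
    define S :: "'a^3^3" where "S = vector [vector [a+1,b,c], vector [d,e-2,f], vector [g,h,i-2]]"
    have "det S = 9 * (a + 1)" unfolding S_def det_3 by simp (use M t in algebra)
    moreover have "y ** S = S ** diag_2_m1_m1"
      unfolding S_def y_def diag_2_m1_m1_def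
      by (simp add: vec_eq_iff forall_3 matrix_matrix_mult_def sum_3)
        (use Q t M in \<open>intro conjI; algebra\<close>)
    ultimately show thesis using that k nine by (metis mult_eq_0_iff neg_equal_0_iff_equal)
  next
    assume k: "e + 1 \<noteq> 0"
    define S :: "'a^3^3" where "S = vector [vector [b,a-2,c], vector [e+1,d,f], vector [h,g,i-2]]"
    have "det S = -9 * (e + 1)" unfolding S_def det_3 by simp (use M t in algebra)
    moreover have "y ** S = S ** diag_2_m1_m1"
      unfolding S_def y_def diag_2_m1_m1_def
      by (simp add: vec_eq_iff forall_3 matrix_matrix_mult_def sum_3)
        (use Q t M in \<open>intro conjI; algebra\<close>)
    ultimately show thesis using that k nine by (metis mult_eq_0_iff neg_equal_0_iff_equal)
  next
    assume k: "i + 1 \<noteq> 0"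
    define S :: "'a^3^3" where "S = vector [vector [c,a-2,b], vector [f,d,e-2], vector [i+1,g,h]]"
    have "det S = 9 * (i + 1)" unfolding S_def det_3 by simp (use M t in algebra)
    moreover have "y ** S = S ** diag_2_m1_m1"
      unfolding S_def y_def diag_2_m1_m1_def
      by (simp add: vec_eq_iff forall_3 matrix_matrix_mult_def sum_3)
        (use Q t M in \<open>intro conjI; algebra\<close>)
    ultimately show thesis using that k nine by (metis mult_eq_0_iff neg_equal_0_iff_equal)
  qed
qed

lemma traceless_quadratic_similar_diag:
  fixes y :: "'a::field^3^3"
  assumes three: "(3::'a) \<noteq> 0" and tr: "trace y = 0"
    and sq: "y ** y = y + msmult s (mat 1)" and nz: "y \<noteq> 0"
  shows "matrix_similar y diag_2_m1_m1"
proof -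
  obtain a b c d e f g h i where Y: "y = vector [vector [a,b,c], vector [d,e,f], vector [g,h,i]]"
    by (rule matrix_3x3_entries)
  have t: "a + e + i = 0" using tr by (simp add: Y trace_def sum_3)
  from sq have Q: "a*a + b*d + c*g = a + s" "a*b + b*e + c*h = b" "a*c + b*f + c*i = c"
      "d*a + e*d + f*g = d" "d*b + e*e + f*h = e + s" "d*c + e*f + f*i = f"
      "g*a + h*d + i*g = g" "g*b + h*e + i*h = h" "g*c + h*f + i*i = i + s"
    by (simp_all add: Y vec_eq_iff forall_3 matrix_matrix_mult_def sum_3 msmult_def mat_def)
  have "\<not> (a = 0 \<and> b = 0 \<and> c = 0 \<and> d = 0 \<and> e = 0 \<and> f = 0 \<and> g = 0 \<and> h = 0 \<and> i = 0)"
    using nz by (auto simp: Y vec_eq_iff forall_3)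
  note char_poly = traceless_quadratic_3x3_char_poly[OF three t Q this]
  obtain S where "det S \<noteq> 0" "y ** S = S ** diag_2_m1_m1"
    using traceless_quadratic_3x3_eigenbasis[OF three t Q[unfolded char_poly(1)] char_poly(2)]
    unfolding Y by blast
  then show ?thesis unfolding matrix_similar_def invertible_det_nz by blast
qed

lemma okubo_idempotent_similar_diag:
  fixes w :: "'a::field"
  assumes three: "(3::'a) \<noteq> 0" and c: "w - w^2 \<noteq> 0"
    and e: "okubo_idempotent w e"
  shows "matrix_similar (msmult (w - w^2) e) diag_2_m1_m1"
proof -
  define c where "c = w - w^2"
  define k where "k = (w - w^2) / 3 * trace (e ** e)"
  have tr: "trace e = 0" and nz: "e \<noteq> 0" and ee: "okubo_mult w e e = e"
    using e by (auto simp: okubo_idempotent_def okubo_carrier_def)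
  from ee have "msmult w (e ** e) - msmult (w^2) (e ** e) - msmult k (mat 1) = e"
    by (simp add: okubo_mult_def k_def)
  then have "msmult c (e ** e) = e + msmult k (mat 1)"
    by (simp add: msmult_diff_left c_def algebra_simps)
  then have "msmult c e ** msmult c e = msmult c e + msmult (c * k) (mat 1)"
    by (simp add: msmult_add msmult_msmult flip: msmult_matrix_mult_left msmult_matrix_mult_right)
  moreover have "trace (msmult c e) = 0" by (simp add: trace_msmult tr)
  moreover have "msmult c e \<noteq> 0" using c nz by (simp add: c_def msmult_eq_0_iff)
  ultimately show ?thesis
    using traceless_quadratic_similar_diag[OF three] unfolding c_def by blast
qed

theorem theorem5p4:
  fixes w :: "'a::alg_closed_field"
  assumes char: "(3::'a) \<noteq> 0"
    and prim: "w ^ 3 = 1" "w \<noteq> 1"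
    and e: "okubo_idempotent w e"
    and f: "okubo_idempotent w f"
  shows "\<exists>\<phi>. okubo_aut w \<phi> \<and> \<phi> e = f"
proof -
  define c where "c = w - w^2"
  have "w \<noteq> 0" using prim by auto
  moreover have "c = w * (1 - w)" by (simp add: c_def power2_eq_square algebra_simps)
  ultimately have c: "c \<noteq> 0" using prim(2) by simp
  have "matrix_similar (msmult c f) (msmult c e)"
    using okubo_idempotent_similar_diag[OF char c[unfolded c_def]] e f
    unfolding c_def by (metis matrix_similar_sym matrix_similar_trans)
  then obtain T T' where T: "T ** T' = mat 1" "T' ** T = mat 1"
    and "msmult c f = T ** msmult c e ** T'"
    by (rule matrix_similarD)
  then have "msmult c f = msmult c (T ** e ** T')"
    by (simp flip: msmult_matrix_mult_left msmult_matrix_mult_right)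
  then have "T ** e ** T' = f" using msmult_cancel[OF c] by metis
  then show ?thesis using okubo_aut_conjugation[OF T] by blast
qed

end
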